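(* Let $\mathbb{F}$ be a field, $\mathcal{C} \subseteq \mathbb{F}^{m \times n}$ a linear code with $k = \dim(\mathcal{C})$, and $p \in \mathbb{Z}$. Define $W_p(\mathcal{C}^\perp) = \{d_{M,p+rm}(\mathcal{C}^\perp) \mid r \in \mathbb{Z}, 1 \leq p + rm \leq mn - k\}$ and $\overline{W}_{p+k}(\mathcal{C}) = \{n + 1 - d_{M,p+k+rm}(\mathcal{C}) \mid r \in \mathbb{Z}, 1 \leq p + k + rm \leq k\}$. Then $\{1,2,\dots,n\} = W_p(\mathcal{C}^\perp) \cup \overline{W}_{p+k}(\mathcal{C})$, and this union is disjoint.
   Context: ${\rm Row}(V)$ is the row space. For a subspace $\mathcal{L} \subseteq \mathbb{F}^n$, $\mathcal{V}_\mathcal{L} = \{V \in \mathbb{F}^{m\times n} \mid {\rm Row}(V) \subseteq \mathcal{L}\}$, and for a linear code $\mathcal{D}$ and $1 \le r \le \dim\mathcal{D}$, $d_{M,r}(\mathcal{D}) = \min\{\dim \mathcal{L} \mid \mathcal{L} \subseteq \mathbb{F}^n \text{ subspace}, \dim(\mathcal{D} \cap \mathcal{V}_\mathcal{L}) \ge r\}$. The dual is $\mathcal{C}^\perp = \{D \in \mathbb{F}^{m\times n} \mid {\rm Trace}(CD^T) = 0 \ \forall C \in \mathcal{C}\}$, of dimension $mn - k$. *)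

theory Defs
  imports "HOL-Analysis.Analysis"
begin

text \<open>An m x n matrix over the field 'a is represented as a vector indexed by
  pairs (i,j) with i :: 'm (row index) and j :: 'n (column index); thus
  m = CARD('m), n = CARD('n).\<close>

type_synonym ('a, 'm, 'n) mat = "'a ^ ('m \<times> 'n)"

definition row_of :: "('a, 'm::finite, 'n::finite) mat \<Rightarrow> 'm \<Rightarrow> 'a ^ 'n" where
  "row_of V i = (\<chi> j. V $ (i, j))"

definition Row :: "('a::field, 'm::finite, 'n::finite) mat \<Rightarrow> ('a ^ 'n) set" where
  "Row V = vec.span (range (row_of V))"

definition VL :: "('a::field ^ 'n::finite) set \<Rightarrow> ('a, 'm::finite, 'n) mat set" where
  "VL L = {V. Row V \<subseteq> L}"

definition dM :: "nat \<Rightarrow> ('a::field, 'm::finite, 'n::finite) mat set \<Rightarrow> nat" where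
  "dM r D = (LEAST d. \<exists>L :: ('a ^ 'n) set. vec.subspace L \<and> vec.dim L = d
                        \<and> vec.dim (D \<inter> (VL L :: ('a, 'm, 'n) mat set)) \<ge> r)"

definition trace_prod :: "('a::field, 'm::finite, 'n::finite) mat \<Rightarrow> ('a, 'm, 'n) mat \<Rightarrow> 'a" where
  "trace_prod C D = (\<Sum>i\<in>UNIV. \<Sum>j\<in>UNIV. C $ (i, j) * D $ (i, j))"
  \<comment> \<open>= Trace(C D^T)\<close>

definition dual_code :: "('a::field, 'm::finite, 'n::finite) mat set \<Rightarrow> ('a, 'm, 'n) mat set" where
  "dual_code C = {D. \<forall>X\<in>C. trace_prod X D = 0}"

definition W_dual :: "int \<Rightarrow> ('a::field, 'm::finite, 'n::finite) mat set \<Rightarrow> int set" where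
  "W_dual p C = (let m = int CARD('m); n = int CARD('n); k = int (vec.dim C) in
     {int (dM (nat (p + r * m)) (dual_code C)) | r. 1 \<le> p + r * m \<and> p + r * m \<le> m * n - k})"

definition Wbar :: "int \<Rightarrow> ('a::field, 'm::finite, 'n::finite) mat set \<Rightarrow> int set" where
  "Wbar q C = (let m = int CARD('m); n = int CARD('n); k = int (vec.dim C) in
     {n + 1 - int (dM (nat (q + r * m)) C) | r. 1 \<le> q + r * m \<and> q + r * m \<le> k})"

end

theory Submission
  imports Defs
begin

text \<open>
  For a code D write f_D(u) = max_dim_VL D u for the largest dimension of D \<inter> V_L over
  u-dimensional subspaces L of F^n. Then d_{M,t}(D) = u exactly when f_D(u-1) < t \<le> f_D(u),
  so W_p(C^\<bottom>) is the set of positions u (residue_jumps) whose jump interval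
  (f_{C^\<bottom>}(u-1), f_{C^\<bottom>}(u)] contains an integer congruent to p mod m, and
  Wbar_{p+k}(C) is the image under u \<mapsto> n+1-u of the analogous set for C and p+k.
  Since V_{L^\<bottom>} = (V_L)^\<bottom> in F^{m\<times>n}, counting dimensions gives the Wei-type duality
  f_{C^\<bottom>}(n-u) + k + mu = mn + f_C(u). It moves the jump interval of C^\<bottom> at u onto
  (f_C(n+1-u), f_C(n-u) + m], shifted by a number congruent to k mod m, while the jump
  interval of C at n+1-u is (f_C(n-u), f_C(n+1-u)]. The two intervals tile m consecutive
  integers, so exactly one of them meets the residue class of p+k.
\<close>

section \<open>Orthogonal complements over an arbitrary field\<close>

definition perp :: "('a::field^'i::finite) set \<Rightarrow> ('a^'i) set" where
  "perp S = {y. \<forall>x\<in>S. scalar_product x y = 0}"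

lemma scalar_product_commute:
  fixes x y :: "'a::comm_semiring_1^'i"
  shows "scalar_product x y = scalar_product y x"
  unfolding scalar_product_def by (simp add: mult.commute)

lemma scalar_product_add_left: "scalar_product (x + z) y = scalar_product x y + scalar_product z y"
  and scalar_product_scale_left: "scalar_product (c *s x) y = c * scalar_product x y"
  and scalar_product_zero_left: "scalar_product 0 y = 0"
  and scalar_product_add_right: "scalar_product y (x + z) = scalar_product y x + scalar_product y z"
  and scalar_product_scale_right: "scalar_product y (c *s x) = c * scalar_product y x"
  and scalar_product_zero_right: "scalar_product y 0 = 0"
  for x y z :: "'a::comm_semiring_1^'i::finite"
  unfolding scalar_product_def
  by (simp_all add: distrib_left distrib_right sum.distrib sum_distrib_left mult_ac)

lemma scalar_product_axis_left: "scalar_product (axis i 1) y = y $ i"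
proof -
  have "scalar_product (axis i 1) y = (\<Sum>j\<in>UNIV. if j = i then y $ j else 0)"
    unfolding scalar_product_def axis_def by (rule sum.cong) auto
  then show ?thesis by simp
qed

lemma matrix_vector_mult_component: "(A *v y) $ i = scalar_product (A $ i) y"
  unfolding matrix_vector_mult_def scalar_product_def by simp

lemma scalar_product_matrix_vector_mult:
  fixes A :: "'a::comm_semiring_1^'j::finite^'i::finite"
  shows "scalar_product (A *v y) c = scalar_product y (c v* A)"
proof -
  have "scalar_product (A *v y) c = (\<Sum>i\<in>UNIV. \<Sum>j\<in>UNIV. c $ i * A $ i $ j * y $ j)"
    unfolding scalar_product_def matrix_vector_mult_def
    by (simp add: sum_distrib_right sum_distrib_left mult_ac)
  also have "\<dots> = (\<Sum>j\<in>UNIV. \<Sum>i\<in>UNIV. c $ i * A $ i $ j * y $ j)"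
    by (rule sum.swap)
  also have "\<dots> = scalar_product y (c v* A)"
    unfolding scalar_product_def vector_matrix_mult_def
    by (simp add: sum_distrib_right sum_distrib_left mult_ac)
  finally show ?thesis .
qed

lemma subspace_perp: "vec.subspace (perp S)"
  unfolding vec.subspace_def perp_def
  by (simp add: scalar_product_add_right scalar_product_scale_right scalar_product_zero_right)

lemma perp_span: "perp (vec.span S) = perp S"
proof
  show "perp (vec.span S) \<subseteq> perp S"
    unfolding perp_def using vec.span_superset by blast
  show "perp S \<subseteq> perp (vec.span S)"
  proof
    fix y assume y: "y \<in> perp S"
    have "vec.subspace {x. scalar_product x y = 0}"
      unfolding vec.subspace_def
      by (auto simp: scalar_product_add_left scalar_product_scale_left scalar_product_zero_left)
    moreover have "S \<subseteq> {x. scalar_product x y = 0}"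
      using y unfolding perp_def by auto
    ultimately show "y \<in> perp (vec.span S)"
      unfolding perp_def using vec.span_minimal by blast
  qed
qed

lemma orthogonal_all_eq_0:
  assumes "\<And>y. scalar_product y v = 0"
  shows "v = 0"
  using assms[of "axis _ 1"] by (simp add: vec_eq_iff scalar_product_axis_left)

lemma dim_le_card: "vec.dim (S :: ('a::field^'i::finite) set) \<le> CARD('i)"
  using vec.dim_subset[OF subset_UNIV, of S] by (simp add: card_cart_basis)

lemma dim_kernel_plus_dim_range:
  fixes g :: "'a::field^'i::finite \<Rightarrow> 'a^'j::finite"
  assumes lin: "Vector_Spaces.linear (*s) (*s) g"
  shows "vec.dim {x. g x = 0} + vec.dim (range g) = CARD('i)"
proof -
  let ?K = "{x. g x = 0}"
  have K: "vec.subspace ?K"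
    by (rule vec.linear_subspace_kernel[OF lin])
  obtain B where B: "B \<subseteq> ?K" "vec.independent B" "?K \<subseteq> vec.span B" "card B = vec.dim ?K"
    by (rule vec.basis_exists[of ?K])
  obtain C where C: "B \<subseteq> C" "C \<subseteq> UNIV" "vec.independent C" "UNIV \<subseteq> vec.span C"
    by (rule vec.maximal_independent_subset_extend[OF subset_UNIV B(2)])
  have "finite C"
    using C(3) by (rule vec.finiteI_independent)
  have span_C: "vec.span C = UNIV"
    using C(4) by blast
  have card_C: "card C = CARD('i)"
    using vec.dim_span_eq_card_independent[OF C(3)] span_C by (simp add: card_cart_basis)
  have card_B: "card B \<le> card C"
    using card_mono[OF \<open>finite C\<close> C(1)] .
  let ?W = "vec.span (C - B)"
  have W: "vec.subspace ?W"
    by (rule vec.subspace_span)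
  have dim_W: "vec.dim ?W = card C - card B"
    using vec.dim_span_eq_card_independent[OF vec.independent_mono[OF C(3)]]
      card_Diff_subset[OF finite_subset[OF C(1) \<open>finite C\<close>] C(1)] by simp
  have "B \<union> (C - B) = C"
    using C(1) by blast
  then have "vec.span C = {x + y |x y. x \<in> vec.span B \<and> y \<in> ?W}"
    using vec.span_Un[of B "C - B"] by simp
  then have sum_KW: "{x + y |x y. x \<in> ?K \<and> y \<in> ?W} = UNIV"
    using vec.span_subspace[OF B(1,3) K] span_C by simp
  have "vec.dim (?K \<inter> ?W) = 0"
    using vec.dim_sums_Int[OF K W] sum_KW dim_W B(4) card_C card_B
    by (simp add: card_cart_basis del: vec.dim_eq_0)
  then have KW: "?K \<inter> ?W \<subseteq> {0}"
    by simp
  have "inj_on g ?W"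
  proof (rule inj_onI)
    fix x y assume "x \<in> ?W" "y \<in> ?W" "g x = g y"
    then have "x - y \<in> ?K \<inter> ?W"
      using vec.subspace_diff[OF W] vec.linear_diff[OF lin] by auto
    then show "x = y"
      using KW by auto
  qed
  moreover have "range g = g ` ?W"
  proof (rule subset_antisym[OF _ image_mono[OF subset_UNIV]])
    show "range g \<subseteq> g ` ?W"
    proof
    fix z assume "z \<in> range g"
    then obtain w where "z = g w"
      by blast
    moreover have "w \<in> {x + y |x y. x \<in> ?K \<and> y \<in> ?W}"
      using sum_KW by blast
    then obtain x y where "w = x + y" "x \<in> ?K" "y \<in> ?W"
      by blast
    ultimately show "z \<in> g ` ?W"
      using vec.linear_add[OF lin] by auto
    qed
  qed
  ultimately have "vec.dim (range g) = vec.dim ?W"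
    using vec.dim_image_eq[OF lin, of ?W] by (simp add: vec.span_span)
  then show ?thesis
    using dim_W B(4) card_C card_B by simp
qed

text \<open>The rows of A indexed by I run through a basis of S; the other rows are zero.\<close>

lemma perp_eq_kernel_matrix:
  fixes S :: "('a::field^'i::finite) set"
  assumes S: "vec.subspace S"
  obtains A :: "'a^'i^'i" and I where
    "perp S = {y. A *v y = 0}" "card I = vec.dim S"
    "\<And>y i. i \<notin> I \<Longrightarrow> (A *v y) $ i = 0"
    "\<And>c. (\<And>i. i \<notin> I \<Longrightarrow> c $ i = 0) \<Longrightarrow> c v* A = 0 \<Longrightarrow> c = 0"
proof -
  obtain B where B: "B \<subseteq> S" "vec.independent B" "S \<subseteq> vec.span B" "card B = vec.dim S"
    by (rule vec.basis_exists[of S])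
  have "finite B"
    using B(2) by (rule vec.finiteI_independent)
  have "card B \<le> CARD('i)"
    using B(4) dim_le_card[of S] by simp
  then obtain I :: "'i set" where "card I = card B"
    using ex_card by blast
  then obtain f where f: "bij_betw f I B"
    using finite_same_card_bij[OF finite \<open>finite B\<close>] by blast
  define A :: "'a^'i^'i" where "A = (\<chi> i. if i \<in> I then f i else 0)"
  have "perp S = perp B"
    using perp_span[of B] vec.span_subspace[OF B(1,3) S] by simp
  also have "\<dots> = {y. A *v y = 0}"
    using f by (auto simp: perp_def A_def vec_eq_iff matrix_vector_mult_component
        scalar_product_zero_left bij_betw_def)
  finally have "perp S = {y. A *v y = 0}" .
  moreover have "(A *v y) $ i = 0" if "i \<notin> I" for y i
    using that by (simp add: A_def matrix_vector_mult_component scalar_product_zero_left)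
  moreover have "c = 0" if c: "\<And>i. i \<notin> I \<Longrightarrow> c $ i = 0" and cA: "c v* A = 0" for c
  proof -
    have "c v* A = (\<Sum>i\<in>I. c $ i *s f i)"
      by (auto simp: vec_eq_iff vector_matrix_mult_def A_def sum_component
          intro: sum.mono_neutral_cong_right)
    also have "\<dots> = (\<Sum>b\<in>B. c $ the_inv_into I f b *s b)"
      using sum.reindex_bij_betw[OF f, of "\<lambda>b. c $ the_inv_into I f b *s b"] f
      by (simp add: bij_betw_def the_inv_into_f_f)
    finally have "(\<Sum>b\<in>B. c $ the_inv_into I f b *s b) = 0"
      using cA by simp
    then have "c $ the_inv_into I f b = 0" if "b \<in> B" for b
      using vec.independentD[OF B(2) \<open>finite B\<close> subset_refl, of "\<lambda>b. c $ the_inv_into I f b"] that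
      by simp
    then have "c $ i = 0" if "i \<in> I" for i
      using that f by (metis bij_betw_apply bij_betw_def the_inv_into_f_f)
    then show "c = 0"
      using c by (metis vec_eq_iff zero_index)
  qed
  ultimately show ?thesis
    using that \<open>card I = card B\<close> B(4) by simp
qed

lemma dim_perp_lower:
  fixes S :: "('a::field^'i::finite) set"
  assumes "vec.subspace S"
  shows "CARD('i) \<le> vec.dim (perp S) + vec.dim S"
proof -
  obtain A :: "'a^'i^'i" and I where A: "perp S = {y. A *v y = 0}" "card I = vec.dim S"
    "\<And>y i. i \<notin> I \<Longrightarrow> (A *v y) $ i = 0"
    by (rule perp_eq_kernel_matrix[OF assms]) simp
  have "vec.dim (range ((*v) A)) \<le> vec.dim {x::'a^'i. \<forall>i. i \<notin> I \<longrightarrow> x $ i = 0}"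
    using A(3) by (intro vec.dim_subset) auto
  then show ?thesis
    using dim_kernel_plus_dim_range[OF matrix_vector_mul_linear_gen, of A] A(1,2)
    by (simp add: dim_substandard_cart)
qed

text \<open>
  Over an arbitrary field S \<inter> perp S need not be trivial, so the dimension is counted
  through the matrix A: the lower bound, applied to the range of A, shows that A is onto
  the coordinates in I.
\<close>

lemma dim_perp:
  fixes S :: "('a::field^'i::finite) set"
  assumes "vec.subspace S"
  shows "vec.dim (perp S) + vec.dim S = CARD('i)"
proof -
  obtain A :: "'a^'i^'i" and I where A: "perp S = {y. A *v y = 0}" "card I = vec.dim S"
    "\<And>y i. i \<notin> I \<Longrightarrow> (A *v y) $ i = 0"
    "\<And>c. (\<And>i. i \<notin> I \<Longrightarrow> c $ i = 0) \<Longrightarrow> c v* A = 0 \<Longrightarrow> c = 0"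
    by (rule perp_eq_kernel_matrix[OF assms]) blast
  let ?U = "range ((*v) A)"
  let ?Z = "{x::'a^'i. \<forall>i. i \<notin> I \<longrightarrow> x $ i = 0}"
  have U: "vec.subspace ?U"
    by (rule vec.linear_subspace_image[OF matrix_vector_mul_linear_gen vec.subspace_UNIV])
  have Z: "vec.subspace ?Z"
    unfolding vec.subspace_def by simp
  have "?Z \<inter> perp ?U \<subseteq> {0}"
  proof
    fix c assume c: "c \<in> ?Z \<inter> perp ?U"
    then have "scalar_product y (c v* A) = 0" for y
      by (auto simp: perp_def scalar_product_matrix_vector_mult[symmetric])
    then show "c \<in> {0}"
      using A(4) c orthogonal_all_eq_0 by blast
  qed
  then have "vec.dim (?Z \<inter> perp ?U) = 0"
    by simp
  moreover have "vec.dim {x + y |x y. x \<in> ?Z \<and> y \<in> perp ?U} \<le> CARD('i)"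
    by (rule dim_le_card)
  ultimately have "vec.dim ?Z + vec.dim (perp ?U) \<le> CARD('i)"
    using vec.dim_sums_Int[OF Z subspace_perp[of ?U]] by linarith
  moreover have "vec.dim ?U \<le> vec.dim ?Z"
    using A(3) by (intro vec.dim_subset) auto
  ultimately have "vec.dim ?U = card I"
    using dim_perp_lower[OF U] by (simp add: dim_substandard_cart)
  then show ?thesis
    using dim_kernel_plus_dim_range[OF matrix_vector_mul_linear_gen, of A] A(1,2) by simp
qed

lemma perp_perp:
  fixes S :: "('a::field^'i::finite) set"
  assumes "vec.subspace S"
  shows "perp (perp S) = S"
proof -
  have sub: "S \<subseteq> perp (perp S)"
  proof
    fix x assume "x \<in> S"
    then have "scalar_product y x = 0" if "y \<in> perp S" for y
      using that scalar_product_commute[of y x] unfolding perp_def by auto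
    then show "x \<in> perp (perp S)"
      unfolding perp_def by blast
  qed
  have "vec.dim (perp (perp S)) = vec.dim S"
    using dim_perp[OF assms] dim_perp[OF subspace_perp[of S]] by linarith
  from vec.subspace_dim_equal[OF assms subspace_perp sub eq_refl[OF this]] show ?thesis
    by (rule sym)
qed

section \<open>Matrices whose rows lie in a subspace\<close>

definition single_row :: "'m::finite \<Rightarrow> 'a::field^'n::finite \<Rightarrow> ('a, 'm, 'n) mat" where
  "single_row i x = (\<chi> p. if fst p = i then x $ snd p else 0)"

lemma row_of_add: "row_of (V + W) i = row_of V i + row_of W i"
  and row_of_diff: "row_of (V - W) i = row_of V i - row_of W i"
  and row_of_scale: "row_of (c *s V) i = c *s row_of V i"
  and row_of_zero: "row_of 0 i = 0"
  and row_of_single_row: "row_of (single_row a x) i = (if i = a then x else 0)"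
  by (auto simp: row_of_def single_row_def vec_eq_iff)

lemma mat_eq_iff_rows: "V = W \<longleftrightarrow> (\<forall>i. row_of V i = row_of W i)"
  by (simp add: row_of_def vec_eq_iff split_paired_All)

lemma VL_iff:
  assumes "vec.subspace L"
  shows "V \<in> VL L \<longleftrightarrow> (\<forall>i. row_of V i \<in> L)"
proof
  assume "V \<in> VL L"
  then show "\<forall>i. row_of V i \<in> L"
    unfolding VL_def Row_def using vec.span_superset by blast
next
  assume "\<forall>i. row_of V i \<in> L"
  then have "vec.span (range (row_of V)) \<subseteq> L"
    using vec.span_minimal[OF _ assms] by blast
  then show "V \<in> VL L"
    unfolding VL_def Row_def by simp
qed

lemma subspace_VL:
  assumes "vec.subspace L"
  shows "vec.subspace (VL L :: ('a::field, 'm::finite, 'n::finite) mat set)"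
proof -
  have "(VL L :: ('a, 'm, 'n) mat set) = {V. \<forall>i. row_of V i \<in> L}"
    using VL_iff[OF assms] by blast
  then show ?thesis
    using assms unfolding vec.subspace_def by (simp add: row_of_add row_of_scale row_of_zero)
qed

lemma VL_mono: "L \<subseteq> L' \<Longrightarrow> VL L \<subseteq> VL L'"
  unfolding VL_def by auto

lemma VL_UNIV: "VL UNIV = UNIV"
  unfolding VL_def by auto

lemma trace_prod_eq_scalar_product: "trace_prod X Y = scalar_product X Y"
  unfolding trace_prod_def scalar_product_def
  by (simp add: sum.cartesian_product UNIV_Times_UNIV)

lemma dual_code_eq_perp: "dual_code C = perp C"
  unfolding dual_code_def perp_def by (simp add: trace_prod_eq_scalar_product)

lemma scalar_product_rows:
  fixes X Y :: "('a::field, 'm::finite, 'n::finite) mat"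
  shows "scalar_product X Y = (\<Sum>i\<in>UNIV. scalar_product (row_of X i) (row_of Y i))"
  using trace_prod_eq_scalar_product[of X Y]
  by (simp add: trace_prod_def scalar_product_def row_of_def)

lemma scalar_product_single_row: "scalar_product (single_row i x) Y = scalar_product x (row_of Y i)"
proof -
  have "scalar_product (single_row i x) Y = (\<Sum>a\<in>UNIV. if a = i then scalar_product x (row_of Y a) else 0)"
    unfolding scalar_product_rows
    by (rule sum.cong) (auto simp: row_of_single_row scalar_product_zero_left)
  then show ?thesis
    by simp
qed

lemma VL_perp:
  assumes L: "vec.subspace L"
  shows "(VL (perp L) :: ('a::field, 'm::finite, 'n::finite) mat set) = perp (VL L)"
proof
  show "(VL (perp L) :: ('a, 'm, 'n) mat set) \<subseteq> perp (VL L)"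
  proof
    fix Y :: "('a, 'm, 'n) mat" assume "Y \<in> VL (perp L)"
    then have "scalar_product X Y = 0" if "X \<in> VL L" for X
      using that unfolding scalar_product_rows VL_iff[OF subspace_perp] VL_iff[OF L]
      by (simp add: perp_def)
    then show "Y \<in> perp (VL L)"
      unfolding perp_def by blast
  qed
  show "perp (VL L) \<subseteq> (VL (perp L) :: ('a, 'm, 'n) mat set)"
  proof
    fix Y :: "('a, 'm, 'n) mat" assume Y: "Y \<in> perp (VL L)"
    have "single_row i x \<in> (VL L :: ('a, 'm, 'n) mat set)" if "x \<in> L" for i x
      using that vec.subspace_0[OF L] by (simp add: VL_iff[OF L] row_of_single_row)
    then have "scalar_product (single_row i x) Y = 0" if "x \<in> L" for i x
      using Y that unfolding perp_def by blast
    then have "row_of Y i \<in> perp L" for i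
      unfolding perp_def by (simp add: scalar_product_single_row)
    then show "Y \<in> VL (perp L)"
      unfolding VL_iff[OF subspace_perp] ..
  qed
qed

lemma linear_single_row:
  "Vector_Spaces.linear (*s) (*s) (single_row i :: 'a::field^'n::finite \<Rightarrow> ('a, 'm::finite, 'n) mat)"
  unfolding Vector_Spaces.linear_iff
  by (simp add: vec.vector_space_axioms mat_eq_iff_rows row_of_add row_of_scale row_of_single_row)

definition rows_within :: "('a::field^'n::finite) set \<Rightarrow> 'm::finite set \<Rightarrow> ('a, 'm, 'n) mat set" where
  "rows_within L I = {V. \<forall>i. row_of V i \<in> (if i \<in> I then L else {0})}"

lemma subspace_rows_within: "vec.subspace L \<Longrightarrow> vec.subspace (rows_within L I)"
  unfolding vec.subspace_def rows_within_def by (auto simp: row_of_add row_of_scale row_of_zero)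

lemma rows_within_insert:
  assumes L: "vec.subspace L" and "a \<notin> I"
  shows "rows_within L (insert a I) = {V + W |V W. V \<in> rows_within L I \<and> W \<in> single_row a ` L}"
proof
  show "rows_within L (insert a I) \<subseteq> {V + W |V W. V \<in> rows_within L I \<and> W \<in> single_row a ` L}"
  proof
    fix Z assume "Z \<in> rows_within L (insert a I)"
    then have Z: "row_of Z i \<in> (if i \<in> insert a I then L else {0})" for i
      by (simp add: rows_within_def)
    have "row_of (Z - single_row a (row_of Z a)) i \<in> (if i \<in> I then L else {0})" for i
      using Z[of i] \<open>a \<notin> I\<close> by (auto simp: row_of_diff row_of_single_row)
    then have "Z - single_row a (row_of Z a) \<in> rows_within L I"
      by (simp add: rows_within_def)
    moreover have "single_row a (row_of Z a) \<in> single_row a ` L"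
      using Z[of a] by simp
    ultimately show "Z \<in> {V + W |V W. V \<in> rows_within L I \<and> W \<in> single_row a ` L}"
      by force
  qed
  show "{V + W |V W. V \<in> rows_within L I \<and> W \<in> single_row a ` L} \<subseteq> rows_within L (insert a I)"
    using \<open>a \<notin> I\<close> vec.subspace_0[OF L]
    by (auto simp: rows_within_def row_of_add row_of_single_row)
qed

lemma dim_rows_within:
  assumes L: "vec.subspace L" and "finite I"
  shows "vec.dim (rows_within L I :: ('a::field, 'm::finite, 'n::finite) mat set) = card I * vec.dim L"
  using \<open>finite I\<close>
proof (induction I rule: finite_induct)
  case empty
  have "rows_within L {} \<subseteq> ({0} :: ('a, 'm, 'n) mat set)"
    by (auto simp: rows_within_def mat_eq_iff_rows row_of_zero)
  then show ?case
    by simp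
next
  case (insert a I)
  let ?R = "single_row a ` L :: ('a, 'm, 'n) mat set"
  have R: "vec.subspace ?R"
    by (rule vec.linear_subspace_image[OF linear_single_row L])
  have "inj_on (single_row a :: 'a^'n \<Rightarrow> ('a, 'm, 'n) mat) (vec.span L)"
    by (rule inj_on_inverseI[of _ "\<lambda>V. row_of V a"]) (simp add: row_of_single_row)
  then have dim_R: "vec.dim ?R = vec.dim L"
    by (rule vec.dim_image_eq[OF linear_single_row])
  have "rows_within L I \<inter> ?R \<subseteq> {0}"
  proof
    fix V assume "V \<in> rows_within L I \<inter> ?R"
    then obtain x where "V = single_row a x" "row_of V a \<in> {0}"
      using insert.hyps(2) unfolding rows_within_def by (metis (no_types, lifting) IntE imageE mem_Collect_eq)
    then show "V \<in> {0}"
      by (simp add: mat_eq_iff_rows row_of_single_row row_of_zero)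
  qed
  then have "vec.dim (rows_within L I \<inter> ?R) = 0"
    by simp
  moreover have "vec.dim (rows_within L (insert a I)) + vec.dim (rows_within L I \<inter> ?R)
      = vec.dim (rows_within L I) + vec.dim ?R"
    using vec.dim_sums_Int[OF subspace_rows_within[OF L, of I] R]
    by (simp add: rows_within_insert[OF L insert.hyps(2)])
  ultimately show ?case
    using dim_R insert.IH insert.hyps by (simp del: vec.dim_eq_0)
qed

lemma dim_VL:
  assumes "vec.subspace L"
  shows "vec.dim (VL L :: ('a::field, 'm::finite, 'n::finite) mat set) = CARD('m) * vec.dim L"
proof -
  have "(VL L :: ('a, 'm, 'n) mat set) = rows_within L UNIV"
    unfolding rows_within_def using VL_iff[OF assms] by auto
  then show ?thesis
    using dim_rows_within[OF assms finite] by simp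
qed

section \<open>Generalized weights via maximal subcode dimensions\<close>

definition max_dim_VL :: "('a::field, 'm::finite, 'n::finite) mat set \<Rightarrow> nat \<Rightarrow> nat" where
  "max_dim_VL D u = Max {vec.dim (D \<inter> VL L) | L :: ('a^'n) set. vec.subspace L \<and> vec.dim L = u}"

lemma finite_dims_VL:
  fixes D :: "('a::field, 'm::finite, 'n::finite) mat set"
  shows "finite {vec.dim (D \<inter> VL L) | L :: ('a^'n) set. vec.subspace L \<and> vec.dim L = u}"
proof (rule finite_subset)
  show "{vec.dim (D \<inter> VL L) | L :: ('a^'n) set. vec.subspace L \<and> vec.dim L = u} \<subseteq> {..CARD('m \<times> 'n)}"
    using dim_le_card by fastforce
qed simp

lemma max_dim_VL_ge:
  fixes D :: "('a::field, 'm::finite, 'n::finite) mat set"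
  assumes "vec.subspace L"
  shows "vec.dim (D \<inter> VL L) \<le> max_dim_VL D (vec.dim L)"
  unfolding max_dim_VL_def using assms by (intro Max_ge[OF finite_dims_VL]) blast

lemma obtain_max_dim_VL:
  fixes D :: "('a::field, 'm::finite, 'n::finite) mat set"
  assumes "u \<le> CARD('n)"
  obtains L :: "('a^'n) set"
  where "vec.subspace L" "vec.dim L = u" "vec.dim (D \<inter> VL L) = max_dim_VL D u"
proof -
  obtain I :: "'n set" where "card I = u"
    using ex_card[OF assms] by blast
  then have "vec.subspace {x::'a^'n. \<forall>i. i \<notin> I \<longrightarrow> x $ i = 0}"
    and "vec.dim {x::'a^'n. \<forall>i. i \<notin> I \<longrightarrow> x $ i = 0} = u"
    unfolding vec.subspace_def by (simp_all add: dim_substandard_cart)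
  then have "{vec.dim (D \<inter> VL L) | L :: ('a^'n) set. vec.subspace L \<and> vec.dim L = u} \<noteq> {}"
    by blast
  then have "max_dim_VL D u \<in> {vec.dim (D \<inter> VL L) | L :: ('a^'n) set. vec.subspace L \<and> vec.dim L = u}"
    unfolding max_dim_VL_def by (rule Max_in[OF finite_dims_VL])
  then show ?thesis
    using that by auto
qed

lemma max_dim_VL_le_dim:
  fixes D :: "('a::field, 'm::finite, 'n::finite) mat set"
  assumes "u \<le> CARD('n)"
  shows "max_dim_VL D u \<le> vec.dim D"
proof -
  obtain L :: "('a^'n) set" where "vec.dim (D \<inter> VL L) = max_dim_VL D u"
    using obtain_max_dim_VL[OF assms] by metis
  then show ?thesis
    using vec.dim_subset[of "D \<inter> VL L" D] by simp
qed

lemma max_dim_VL_Suc: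
  fixes D :: "('a::field, 'm::finite, 'n::finite) mat set"
  assumes "u < CARD('n)"
  shows "max_dim_VL D u \<le> max_dim_VL D (Suc u)"
proof -
  obtain L :: "('a^'n) set"
    where L: "vec.subspace L" "vec.dim L = u" "vec.dim (D \<inter> VL L) = max_dim_VL D u"
    using obtain_max_dim_VL[of u D] assms by auto
  have "L \<noteq> UNIV"
    using L(2) assms by (auto simp: card_cart_basis)
  then obtain x where "x \<notin> L"
    by blast
  let ?L' = "vec.span (insert x L)"
  have "x \<notin> vec.span L"
    using \<open>x \<notin> L\<close> L(1) by (metis vec.span_eq_iff)
  then have "vec.dim ?L' = Suc u"
    using vec.dim_insert[of x L] L(2) by simp
  have "L \<subseteq> ?L'"
    using vec.span_superset by blast
  then have "D \<inter> VL L \<subseteq> D \<inter> VL ?L'"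
    using VL_mono by blast
  then have "max_dim_VL D u \<le> vec.dim (D \<inter> VL ?L')"
    using vec.dim_subset L(3) by metis
  also have "\<dots> \<le> max_dim_VL D (Suc u)"
    using max_dim_VL_ge[OF vec.subspace_span, of D "insert x L"] \<open>vec.dim ?L' = Suc u\<close> by simp
  finally show ?thesis .
qed

lemma max_dim_VL_mono:
  fixes D :: "('a::field, 'm::finite, 'n::finite) mat set"
  assumes "u \<le> v" "v \<le> CARD('n)"
  shows "max_dim_VL D u \<le> max_dim_VL D v"
  using assms
proof (induction v rule: dec_induct)
  case (step v)
  then show ?case
    using max_dim_VL_Suc[of v D] by simp
qed simp

lemma max_dim_VL_0: "max_dim_VL D 0 = 0"
proof -
  obtain L where L: "vec.subspace L" "vec.dim L = 0" "vec.dim (D \<inter> VL L) = max_dim_VL D 0"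
    using obtain_max_dim_VL[of 0 D] by auto
  have "VL L \<subseteq> {0}"
  proof
    fix V assume "V \<in> VL L"
    then have "row_of V i = row_of 0 i" for i
      using L(1,2) by (auto simp: VL_iff row_of_zero)
    then show "V \<in> {0}"
      by (simp add: mat_eq_iff_rows)
  qed
  then have "D \<inter> VL L \<subseteq> {0}"
    by blast
  then have "vec.dim (D \<inter> VL L) = 0"
    by simp
  then show ?thesis
    using L(3) by simp
qed

lemma max_dim_VL_top: "max_dim_VL (D :: ('a::field, 'm::finite, 'n::finite) mat set) CARD('n) = vec.dim D"
proof -
  obtain L :: "('a^'n) set"
    where L: "vec.subspace L" "vec.dim L = CARD('n)" "vec.dim (D \<inter> VL L) = max_dim_VL D CARD('n)"
    using obtain_max_dim_VL[of "CARD('n)" D] by auto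
  then have "L = UNIV"
    using vec.subspace_dim_equal[OF L(1) vec.subspace_UNIV] by (simp add: card_cart_basis)
  then show ?thesis
    using L(3) by (simp add: VL_UNIV)
qed

lemma dM_eq_Least:
  fixes D :: "('a::field, 'm::finite, 'n::finite) mat set"
  shows "dM t D = (LEAST u. u \<le> CARD('n) \<and> t \<le> max_dim_VL D u)"
proof -
  have "(\<exists>L :: ('a^'n) set. vec.subspace L \<and> vec.dim L = u \<and> t \<le> vec.dim (D \<inter> VL L))
      \<longleftrightarrow> u \<le> CARD('n) \<and> t \<le> max_dim_VL D u" for u
  proof
    assume "\<exists>L :: ('a^'n) set. vec.subspace L \<and> vec.dim L = u \<and> t \<le> vec.dim (D \<inter> VL L)"
    then obtain L :: "('a^'n) set"
      where "vec.subspace L" "vec.dim L = u" "t \<le> vec.dim (D \<inter> VL L)"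
      by blast
    then show "u \<le> CARD('n) \<and> t \<le> max_dim_VL D u"
      using max_dim_VL_ge[of L D] dim_le_card[of L] by auto
  next
    assume "u \<le> CARD('n) \<and> t \<le> max_dim_VL D u"
    then show "\<exists>L :: ('a^'n) set. vec.subspace L \<and> vec.dim L = u \<and> t \<le> vec.dim (D \<inter> VL L)"
      using obtain_max_dim_VL[of u D] by metis
  qed
  then show ?thesis
    unfolding dM_def by simp
qed

lemma dM_eq_iff:
  fixes D :: "('a::field, 'm::finite, 'n::finite) mat set"
  assumes "1 \<le> t" "t \<le> vec.dim D"
  shows "dM t D = u \<longleftrightarrow>
    1 \<le> u \<and> u \<le> CARD('n) \<and> max_dim_VL D (u - 1) < t \<and> t \<le> max_dim_VL D u"
proof -
  let ?P = "\<lambda>u. u \<le> CARD('n) \<and> t \<le> max_dim_VL D u"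
  have P_dM: "?P (dM t D)"
    unfolding dM_eq_Least using assms(2) by (intro LeastI[of ?P "CARD('n)"]) (simp add: max_dim_VL_top)
  have "dM t D \<noteq> 0"
  proof
    assume "dM t D = 0"
    then show False
      using P_dM assms(1) by (simp add: max_dim_VL_0)
  qed
  moreover have "\<not> ?P (dM t D - 1)"
    using \<open>dM t D \<noteq> 0\<close> unfolding dM_eq_Least by (intro not_less_Least) simp
  moreover have "dM t D \<le> u" if "?P u" for u
    unfolding dM_eq_Least using that by (rule Least_le)
  moreover have "u \<le> dM t D" if "u \<le> CARD('n)" "max_dim_VL D (u - 1) < t"
  proof (rule ccontr)
    assume "\<not> u \<le> dM t D"
    then have "max_dim_VL D (dM t D) \<le> max_dim_VL D (u - 1)"
      using that P_dM by (intro max_dim_VL_mono) auto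
    then show False
      using that P_dM by simp
  qed
  ultimately show ?thesis
    using P_dM by (auto simp: le_antisym)
qed

section \<open>Duality\<close>

lemma perp_sums:
  assumes "0 \<in> S" "0 \<in> T"
  shows "perp {x + y |x y. x \<in> S \<and> y \<in> T} = perp S \<inter> perp T"
proof
  show "perp {x + y |x y. x \<in> S \<and> y \<in> T} \<subseteq> perp S \<inter> perp T"
    unfolding perp_def using assms by force
  show "perp S \<inter> perp T \<subseteq> perp {x + y |x y. x \<in> S \<and> y \<in> T}"
    unfolding perp_def by (auto simp: scalar_product_add_left)
qed

lemma dim_dual_code:
  fixes C :: "('a::field, 'm::finite, 'n::finite) mat set"
  assumes "vec.subspace C"
  shows "vec.dim (dual_code C) + vec.dim C = CARD('m) * CARD('n)"
  using dim_perp[OF assms] by (simp add: dual_code_eq_perp)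

lemma dim_dual_code_inter_VL_perp:
  fixes C :: "('a::field, 'm::finite, 'n::finite) mat set"
  assumes C: "vec.subspace C" and L: "vec.subspace L"
  shows "vec.dim (dual_code C \<inter> VL (perp L)) + vec.dim C + CARD('m) * vec.dim L
    = CARD('m) * CARD('n) + vec.dim (C \<inter> VL L)"
proof -
  let ?S = "{X + Y |X Y. X \<in> C \<and> Y \<in> VL L}"
  have VL: "vec.subspace (VL L :: ('a, 'm, 'n) mat set)"
    by (rule subspace_VL[OF L])
  have "dual_code C \<inter> VL (perp L) = perp ?S"
    using perp_sums[OF vec.subspace_0[OF C] vec.subspace_0[OF VL]]
    by (simp add: dual_code_eq_perp VL_perp[OF L])
  moreover have "vec.dim (perp ?S) + vec.dim ?S = CARD('m) * CARD('n)"
    using dim_perp[OF vec.subspace_sums[OF C VL]] by simp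
  moreover have "vec.dim ?S + vec.dim (C \<inter> VL L) = vec.dim C + CARD('m) * vec.dim L"
    using vec.dim_sums_Int[OF C VL] by (simp add: dim_VL[OF L])
  ultimately show ?thesis
    by simp
qed

lemma max_dim_VL_duality:
  fixes C :: "('a::field, 'm::finite, 'n::finite) mat set"
  assumes C: "vec.subspace C" and u: "u \<le> CARD('n)"
  shows "max_dim_VL (dual_code C) (CARD('n) - u) + vec.dim C + CARD('m) * u
    = CARD('m) * CARD('n) + max_dim_VL C u"
proof (rule antisym)
  obtain L :: "('a^'n) set"
    where L: "vec.subspace L" "vec.dim L = u" "vec.dim (C \<inter> VL L) = max_dim_VL C u"
    using obtain_max_dim_VL[OF u] by metis
  have "vec.dim (perp L) = CARD('n) - u"
    using dim_perp[OF L(1)] L(2) by simp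
  then have "vec.dim (dual_code C \<inter> VL (perp L)) \<le> max_dim_VL (dual_code C) (CARD('n) - u)"
    using max_dim_VL_ge[OF subspace_perp, of "dual_code C" L] by simp
  then show "CARD('m) * CARD('n) + max_dim_VL C u
    \<le> max_dim_VL (dual_code C) (CARD('n) - u) + vec.dim C + CARD('m) * u"
    using dim_dual_code_inter_VL_perp[OF C L(1), unfolded L(2,3)] by linarith
next
  obtain M :: "('a^'n) set"
    where M: "vec.subspace M" "vec.dim M = CARD('n) - u"
      "vec.dim (dual_code C \<inter> VL M) = max_dim_VL (dual_code C) (CARD('n) - u)"
    by (rule obtain_max_dim_VL[OF diff_le_self])
  have "vec.dim (perp M) = u"
    using dim_perp[OF M(1)] M(2) u by simp
  then have "vec.dim (C \<inter> VL (perp M)) \<le> max_dim_VL C u"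
    using max_dim_VL_ge[OF subspace_perp, of C M] by simp
  then show "max_dim_VL (dual_code C) (CARD('n) - u) + vec.dim C + CARD('m) * u
    \<le> CARD('m) * CARD('n) + max_dim_VL C u"
    using dim_dual_code_inter_VL_perp[OF C subspace_perp[of M],
        unfolded perp_perp[OF M(1)] \<open>vec.dim (perp M) = u\<close> M(3)]
    by linarith
qed

section \<open>Residue classes in intervals\<close>

definition meets_class :: "int \<Rightarrow> int \<Rightarrow> int \<Rightarrow> int \<Rightarrow> bool" where
  "meets_class m q a b \<longleftrightarrow> (\<exists>t. t mod m = q mod m \<and> a < t \<and> t \<le> b)"

lemma meets_class_shift: "meets_class m q a b \<longleftrightarrow> meets_class m (q + c) (a + c) (b + c)"
proof
  assume "meets_class m q a b"
  then obtain t where t: "t mod m = q mod m" "a < t" "t \<le> b"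
    unfolding meets_class_def by blast
  have "(t + c) mod m = (q + c) mod m"
    using t(1) by (metis mod_add_left_eq)
  then show "meets_class m (q + c) (a + c) (b + c)"
    using t(2,3) unfolding meets_class_def by (intro exI[of _ "t + c"]) simp
next
  assume "meets_class m (q + c) (a + c) (b + c)"
  then obtain t where t: "t mod m = (q + c) mod m" "a + c < t" "t \<le> b + c"
    unfolding meets_class_def by blast
  have "(t - c) mod m = q mod m"
    using t(1) by (metis add_diff_cancel_right' mod_diff_left_eq)
  then show "meets_class m q a b"
    using t(2,3) unfolding meets_class_def by (intro exI[of _ "t - c"]) simp
qed

lemma meets_class_cong: "q mod m = q' mod m \<Longrightarrow> meets_class m q a b \<longleftrightarrow> meets_class m q' a b"
  unfolding meets_class_def by simp

lemma meets_class_split: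
  assumes "0 < m" "a \<le> b"
  shows "meets_class m q a b \<longleftrightarrow> \<not> meets_class m q b (a + m)"
proof
  assume "meets_class m q a b"
  then obtain s where s: "s mod m = q mod m" "a < s" "s \<le> b"
    unfolding meets_class_def by blast
  show "\<not> meets_class m q b (a + m)"
  proof
    assume "meets_class m q b (a + m)"
    then obtain t where t: "t mod m = q mod m" "b < t" "t \<le> a + m"
      unfolding meets_class_def by blast
    then have "t mod m = s mod m"
      using s(1) by simp
    then have "m dvd t - s"
      by (simp add: mod_eq_dvd_iff)
    then show False
      using s t zdvd_imp_le[of m "t - s"] by linarith
  qed
next
  assume "\<not> meets_class m q b (a + m)"
  define t where "t = a + 1 + (q - a - 1) mod m"
  have "t mod m = (a + 1 + (q - a - 1)) mod m"
    unfolding t_def by (rule mod_add_right_eq)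
  then have t: "t mod m = q mod m"
    by simp
  have "a < t" "t \<le> a + m"
    unfolding t_def using pos_mod_sign[OF \<open>0 < m\<close>, of "q - a - 1"]
      pos_mod_bound[OF \<open>0 < m\<close>, of "q - a - 1"] by linarith+
  show "meets_class m q a b"
  proof (cases "t \<le> b")
    case True
    then show ?thesis
      using t \<open>a < t\<close> unfolding meets_class_def by blast
  next
    case False
    then have "meets_class m q b (a + m)"
      using t \<open>t \<le> a + m\<close> unfolding meets_class_def by (intro exI[of _ t]) simp
    then show ?thesis
      using \<open>\<not> meets_class m q b (a + m)\<close> by contradiction
  qed
qed

section \<open>The sets of generalized weights\<close>

definition residue_jumps :: "('a::field, 'm::finite, 'n::finite) mat set \<Rightarrow> int \<Rightarrow> nat set" where
  "residue_jumps D q = {u. 1 \<le> u \<and> u \<le> CARD('n) \<and>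
     meets_class (int CARD('m)) q (int (max_dim_VL D (u - 1))) (int (max_dim_VL D u))}"

lemma residue_class_reindex:
  fixes m q :: int
  shows "{f (q + r * m) |r. P (q + r * m)} = f ` {t. t mod m = q mod m \<and> P t}"
proof (intro set_eqI iffI)
  fix x assume "x \<in> f ` {t. t mod m = q mod m \<and> P t}"
  then obtain t where t: "x = f t" "t mod m = q mod m" "P t"
    by blast
  then have "(t - q) mod m = 0"
    by (simp add: mod_eq_dvd_iff)
  then have "q + ((t - q) div m) * m = t"
    using div_mult_mod_eq[of "t - q" m] by simp
  then have "x = f (q + ((t - q) div m) * m) \<and> P (q + ((t - q) div m) * m)"
    using t(1,3) by simp
  then show "x \<in> {f (q + r * m) |r. P (q + r * m)}"
    by blast
qed auto

lemma dM_residue_image: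
  fixes D :: "('a::field, 'm::finite, 'n::finite) mat set"
  shows "(\<lambda>t. dM (nat t) D) ` {t. t mod int CARD('m) = q mod int CARD('m) \<and> 1 \<le> t \<and> t \<le> int (vec.dim D)}
    = residue_jumps D q"
proof (intro set_eqI iffI)
  fix u assume "u \<in> (\<lambda>t. dM (nat t) D) `
    {t. t mod int CARD('m) = q mod int CARD('m) \<and> 1 \<le> t \<and> t \<le> int (vec.dim D)}"
  then obtain t where t: "u = dM (nat t) D" "t mod int CARD('m) = q mod int CARD('m)"
    "1 \<le> t" "t \<le> int (vec.dim D)"
    by blast
  then have u: "1 \<le> u" "u \<le> CARD('n)" "max_dim_VL D (u - 1) < nat t" "nat t \<le> max_dim_VL D u"
    using dM_eq_iff[of "nat t" D u] by simp_all
  then have "int (max_dim_VL D (u - 1)) < t" "t \<le> int (max_dim_VL D u)"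
    using t(3) by linarith+
  then show "u \<in> residue_jumps D q"
    using t(2) u(1,2) unfolding residue_jumps_def meets_class_def by blast
next
  fix u assume "u \<in> residue_jumps D q"
  then obtain t where u: "1 \<le> u" "u \<le> CARD('n)" and t: "t mod int CARD('m) = q mod int CARD('m)"
    "int (max_dim_VL D (u - 1)) < t" "t \<le> int (max_dim_VL D u)"
    unfolding residue_jumps_def meets_class_def by blast
  have "1 \<le> nat t" "nat t \<le> vec.dim D"
    using t(2,3) max_dim_VL_le_dim[OF u(2), of D] by linarith+
  moreover have "max_dim_VL D (u - 1) < nat t" "nat t \<le> max_dim_VL D u"
    using t(2,3) by linarith+
  ultimately have "dM (nat t) D = u"
    using dM_eq_iff[of "nat t" D u] u by simp
  then show "u \<in> (\<lambda>t. dM (nat t) D) `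
    {t. t mod int CARD('m) = q mod int CARD('m) \<and> 1 \<le> t \<and> t \<le> int (vec.dim D)}"
    using t(1) \<open>1 \<le> nat t\<close> \<open>nat t \<le> vec.dim D\<close> by (intro image_eqI[of _ _ t]) auto
qed

lemma W_dual_eq:
  fixes C :: "('a::field, 'm::finite, 'n::finite) mat set"
  assumes "vec.subspace C"
  shows "W_dual p C = int ` residue_jumps (dual_code C) p"
proof -
  let ?m = "int CARD('m)" and ?D = "dual_code C"
  have "?m * int CARD('n) - int (vec.dim C) = int (vec.dim ?D)"
    using dim_dual_code[OF assms] by (metis add_diff_cancel_right' of_nat_add of_nat_mult)
  then have "W_dual p C = (\<lambda>t. int (dM (nat t) ?D)) ` {t. t mod ?m = p mod ?m \<and> 1 \<le> t \<and> t \<le> int (vec.dim ?D)}"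
    unfolding W_dual_def Let_def
    by (simp only: residue_class_reindex[where f="\<lambda>t. int (dM (nat t) ?D)" and P="\<lambda>t. 1 \<le> t \<and> t \<le> int (vec.dim ?D)"])
  then show ?thesis
    unfolding dM_residue_image[symmetric] by (simp add: image_image)
qed

lemma Wbar_eq:
  fixes C :: "('a::field, 'm::finite, 'n::finite) mat set"
  shows "Wbar q C = (\<lambda>u. int CARD('n) + 1 - int u) ` residue_jumps C q"
proof -
  let ?m = "int CARD('m)" and ?n = "int CARD('n)"
  have "Wbar q C = (\<lambda>t. ?n + 1 - int (dM (nat t) C)) `
      {t. t mod ?m = q mod ?m \<and> 1 \<le> t \<and> t \<le> int (vec.dim C)}"
    unfolding Wbar_def Let_def
    by (simp only: residue_class_reindex[where f="\<lambda>t. ?n + 1 - int (dM (nat t) C)"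
          and P="\<lambda>t. 1 \<le> t \<and> t \<le> int (vec.dim C)"])
  then show ?thesis
    unfolding dM_residue_image[symmetric] by (simp add: image_image)
qed

lemma residue_jumps_duality:
  fixes C :: "('a::field, 'm::finite, 'n::finite) mat set"
  assumes C: "vec.subspace C" and u: "1 \<le> u" "u \<le> CARD('n)"
  shows "u \<in> residue_jumps (dual_code C) p \<longleftrightarrow>
    CARD('n) + 1 - u \<notin> residue_jumps C (p + int (vec.dim C))"
proof -
  let ?m = "int CARD('m)" and ?k = "int (vec.dim C)" and ?D = "dual_code C"
  define A where "A = CARD('n) - u"
  define B where "B = CARD('n) + 1 - u"
  have AB: "A \<le> CARD('n)" "B \<le> CARD('n)" "CARD('n) - A = u" "CARD('n) - B = u - 1" "B - 1 = A" "1 \<le> B"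
    using u unfolding A_def B_def by auto
  define c where "c = ?k + ?m * int B - ?m * int CARD('n)"
  have "int (max_dim_VL ?D (u - 1)) + c = int (max_dim_VL C B)"
    using arg_cong[OF max_dim_VL_duality[OF C AB(2), unfolded AB(4)], of int]
    unfolding c_def by (simp add: algebra_simps)
  moreover have "int (max_dim_VL ?D u) + c = int (max_dim_VL C A) + ?m"
  proof -
    have "int A * ?m = ?m * int CARD('n) - int u * ?m"
      using u unfolding A_def by (simp add: of_nat_diff algebra_simps)
    moreover have "int B = int A + 1"
      using AB(5) u unfolding A_def B_def by simp
    ultimately show ?thesis
      using arg_cong[OF max_dim_VL_duality[OF C AB(1), unfolded AB(3)], of int]
      unfolding c_def by (simp add: algebra_simps)
  qed
  moreover have "(p + c) mod ?m = (p + ?k) mod ?m"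
  proof -
    have "p + c = p + ?k + (int B - int CARD('n)) * ?m"
      unfolding c_def by (simp add: algebra_simps)
    then show ?thesis
      by (simp only: mod_mult_self1)
  qed
  moreover have "max_dim_VL C A \<le> max_dim_VL C B"
    using AB by (intro max_dim_VL_mono) auto
  ultimately have "u \<in> residue_jumps ?D p \<longleftrightarrow>
      \<not> meets_class ?m (p + ?k) (int (max_dim_VL C A)) (int (max_dim_VL C B))"
    using u meets_class_shift[of ?m p _ _ c] meets_class_cong[of "p + c" ?m "p + ?k"]
      meets_class_split[of ?m "int (max_dim_VL C A)" "int (max_dim_VL C B)" "p + ?k"]
    unfolding residue_jumps_def by simp
  then show ?thesis
    using u AB unfolding residue_jumps_def B_def by simp
qed

lemma residue_jumps_reflection:
  fixes C :: "('a::field, 'm::finite, 'n::finite) mat set"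
  assumes C: "vec.subspace C"
  shows "(\<lambda>u. CARD('n) + 1 - u) ` residue_jumps C (p + int (vec.dim C))
    = {1..CARD('n)} - residue_jumps (dual_code C) p"
proof (intro set_eqI iffI)
  fix v assume "v \<in> (\<lambda>u. CARD('n) + 1 - u) ` residue_jumps C (p + int (vec.dim C))"
  then obtain u where u: "v = CARD('n) + 1 - u" "u \<in> residue_jumps C (p + int (vec.dim C))"
    by blast
  then have "1 \<le> u" "u \<le> CARD('n)"
    by (simp_all add: residue_jumps_def)
  then have "1 \<le> v" "v \<le> CARD('n)" "CARD('n) + 1 - v = u"
    using u(1) by simp_all
  then show "v \<in> {1..CARD('n)} - residue_jumps (dual_code C) p"
    using residue_jumps_duality[OF C, of v p] u(2) by simp
next
  fix v assume v: "v \<in> {1..CARD('n)} - residue_jumps (dual_code C) p"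
  then have "CARD('n) + 1 - v \<in> residue_jumps C (p + int (vec.dim C))"
    using residue_jumps_duality[OF C, of v p] by simp
  moreover have "v = CARD('n) + 1 - (CARD('n) + 1 - v)"
    using v by simp
  ultimately show "v \<in> (\<lambda>u. CARD('n) + 1 - u) ` residue_jumps C (p + int (vec.dim C))"
    by (rule rev_image_eqI)
qed

theorem proposition18:
  fixes C :: "('a::field, 'm::finite, 'n::finite) mat set" and p :: int
  assumes "vec.subspace C"
  shows "{1..int CARD('n)} = W_dual p C \<union> Wbar (p + int (vec.dim C)) C
         \<and> W_dual p C \<inter> Wbar (p + int (vec.dim C)) C = {}"
proof -
  let ?n = "CARD('n)"
  let ?J = "residue_jumps (dual_code C) p" and ?J' = "residue_jumps C (p + int (vec.dim C))"
  have "?J \<subseteq> {1..?n}"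
    by (auto simp: residue_jumps_def)
  have "Wbar (p + int (vec.dim C)) C = int ` (\<lambda>u. ?n + 1 - u) ` ?J'"
    unfolding Wbar_eq image_image by (rule image_cong) (auto simp: residue_jumps_def)
  then have "Wbar (p + int (vec.dim C)) C = int ` ({1..?n} - ?J)"
    by (simp only: residue_jumps_reflection[OF assms])
  moreover have "W_dual p C = int ` ?J"
    by (rule W_dual_eq[OF assms])
  moreover have "{1..int ?n} = int ` {1..?n}"
    by (simp add: image_int_atLeastAtMost)
  ultimately show ?thesis
    using \<open>?J \<subseteq> {1..?n}\<close> by auto
qed

end
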